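(* Let $\cdot:H\otimes B\to B$ be a symmetric partial action of $H$ on a unital algebra $B$, and consider the partial $H$-module $(B,\pi)$ with $\pi(h)(b)=h\cdot b$ and its standard dilation $((\overline B,T_\pi),\varphi)$. Then: (1) $\overline B\subseteq\operatorname{Hom}_k(H,B)$ is closed under the convolution product $(f*g)(k)=f(k_{(1)})g(k_{(2)})$. With this product and the action $(h\triangleright f)(k)=f(kh)$, it is an idempotent (not necessarily unital) $H$-module algebra, i.e. $h\triangleright(f*g)=(h_{(1)}\triangleright f)*(h_{(2)}\triangleright g)$ and $\overline B*\overline B=\overline B$; (2) $\varphi:B\to\overline B$ is multiplicative; (3) $\varphi(B)$ is an ideal of $\overline B$. Consequently, $(\overline B,\varphi)$ is the globalization (enveloping action) of the partial action on $B$. That is, $\varphi$ is an injective multiplicative map whose image is an ideal of $\overline B$ generating $\overline B$ as an $H$-module, and $\varphi(h\cdot b)=\varphi(1_B)*(h\triangleright\varphi(b))$ for all $h\in H$, $b\in B$.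
   Context: Throughout, $k$ is a field and $H$ is a Hopf algebra over $k$ with bijective antipode $S$ and Sweedler notation $\Delta(h)=h_{(1)}\otimes h_{(2)}$. A symmetric partial action of $H$ on a unital algebra $B$ is a linear map $h\otimes b\mapsto h\cdot b$ such that for all $h,k\in H$, $a,b\in B$: - $1_H\cdot a=a$; - $h\cdot(ab)=(h_{(1)}\cdot a)(h_{(2)}\cdot b)$; - $h\cdot(k\cdot a)=(h_{(1)}\cdot1_B)(h_{(2)}k\cdot a)$; - $h\cdot(k\cdot a)=(h_{(1)}k\cdot a)(h_{(2)}\cdot1_B)$. Standard dilation of a partial $H$-module $(M,\pi)$: $\operatorname{Hom}_k(H,M)$ is a left $H$-module via $(h\triangleright f)(k)=f(kh)$. Set $\varphi(m)(h)=\pi(h)(m)$, let $\overline M=H\triangleright\varphi(M)$ be the $H$-submodule generated by $\varphi(M)$, and $T_\pi(f)=\varphi(f(1_H))$. *)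

theory Defs
  imports Main HOL.Vector_Spaces
begin

(* ---------- finite tensors, Sweedler notation ----------
   An element of H \<otimes> H is represented by a finite list of pairs
   [(a_1,b_1),...,(a_n,b_n)] standing for \<Sum> a_i \<otimes> b_i; similarly H\<otimes>H\<otimes>H by triples.
   Two such lists represent the same tensor iff every k-bilinear (trilinear) form
   takes the same value on them (H\<^sup>* \<otimes> H\<^sup>* separates points of H \<otimes> H). *)

definition bilin_form :: "('k::field \<Rightarrow> 'h::ab_group_add \<Rightarrow> 'h) \<Rightarrow> ('h \<Rightarrow> 'h \<Rightarrow> 'k) \<Rightarrow> bool" where
  "bilin_form s f \<longleftrightarrow>
     (\<forall>y. Vector_Spaces.linear s (*) (\<lambda>x. f x y)) \<and> (\<forall>x. Vector_Spaces.linear s (*) (f x))"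

definition trilin_form :: "('k::field \<Rightarrow> 'h::ab_group_add \<Rightarrow> 'h) \<Rightarrow> ('h \<Rightarrow> 'h \<Rightarrow> 'h \<Rightarrow> 'k) \<Rightarrow> bool" where
  "trilin_form s f \<longleftrightarrow>
     (\<forall>y z. Vector_Spaces.linear s (*) (\<lambda>x. f x y z)) \<and>
     (\<forall>x z. Vector_Spaces.linear s (*) (\<lambda>y. f x y z)) \<and>
     (\<forall>x y. Vector_Spaces.linear s (*) (f x y))"

definition tens2_eq :: "('k::field \<Rightarrow> 'h::ab_group_add \<Rightarrow> 'h) \<Rightarrow> ('h \<times> 'h) list \<Rightarrow> ('h \<times> 'h) list \<Rightarrow> bool" where
  "tens2_eq s D1 D2 \<longleftrightarrow>
     (\<forall>f. bilin_form s f \<longrightarrow>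
        sum_list (map (\<lambda>(x,y). f x y) D1) = sum_list (map (\<lambda>(x,y). f x y) D2))"

definition tens3_eq :: "('k::field \<Rightarrow> 'h::ab_group_add \<Rightarrow> 'h) \<Rightarrow> ('h \<times> 'h \<times> 'h) list \<Rightarrow> ('h \<times> 'h \<times> 'h) list \<Rightarrow> bool" where
  "tens3_eq s D1 D2 \<longleftrightarrow>
     (\<forall>f. trilin_form s f \<longrightarrow>
        sum_list (map (\<lambda>(x,y,z). f x y z) D1) = sum_list (map (\<lambda>(x,y,z). f x y z) D2))"

definition k_algebra :: "('k::field \<Rightarrow> 'a::ring_1 \<Rightarrow> 'a) \<Rightarrow> bool" where
  "k_algebra s \<longleftrightarrow> vector_space s \<and>
     (\<forall>c x y. s c (x * y) = s c x * y \<and> s c (x * y) = x * s c y)"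

definition hopf_algebra ::
  "('k::field \<Rightarrow> 'h::ring_1 \<Rightarrow> 'h) \<Rightarrow> ('h \<Rightarrow> ('h \<times> 'h) list) \<Rightarrow> ('h \<Rightarrow> 'k) \<Rightarrow> ('h \<Rightarrow> 'h) \<Rightarrow> bool" where
  "hopf_algebra s Delta eps S \<longleftrightarrow>
     k_algebra s \<and>
     \<comment> \<open>\<Delta> is k-linear\<close>
     (\<forall>x y. tens2_eq s (Delta (x + y)) (Delta x @ Delta y)) \<and>
     (\<forall>c x. tens2_eq s (Delta (s c x)) (map (\<lambda>(a,b). (s c a, b)) (Delta x))) \<and>
     \<comment> \<open>coassociativity\<close>
     (\<forall>h. tens3_eq s
        (concat (map (\<lambda>(a,b). map (\<lambda>(a1,a2). (a1,a2,b)) (Delta a)) (Delta h)))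
        (concat (map (\<lambda>(a,b). map (\<lambda>(b1,b2). (a,b1,b2)) (Delta b)) (Delta h)))) \<and>
     \<comment> \<open>counit\<close>
     Vector_Spaces.linear s (*) eps \<and>
     (\<forall>h. sum_list (map (\<lambda>(a,b). s (eps a) b) (Delta h)) = h) \<and>
     (\<forall>h. sum_list (map (\<lambda>(a,b). s (eps b) a) (Delta h)) = h) \<and>
     \<comment> \<open>\<Delta> and \<epsilon> are algebra maps\<close>
     (\<forall>x y. tens2_eq s (Delta (x * y))
        (concat (map (\<lambda>(a,b). map (\<lambda>(c,d). (a * c, b * d)) (Delta y)) (Delta x)))) \<and>
     tens2_eq s (Delta 1) [(1,1)] \<and>
     (\<forall>x y. eps (x * y) = eps x * eps y) \<and> eps 1 = 1 \<and>
     \<comment> \<open>bijective antipode\<close>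
     Vector_Spaces.linear s s S \<and> bij S \<and>
     (\<forall>h. sum_list (map (\<lambda>(a,b). S a * b) (Delta h)) = s (eps h) 1) \<and>
     (\<forall>h. sum_list (map (\<lambda>(a,b). a * S b) (Delta h)) = s (eps h) 1)"

definition sym_partial_action ::
  "('k::field \<Rightarrow> 'h::ring_1 \<Rightarrow> 'h) \<Rightarrow> ('k \<Rightarrow> 'b::ring_1 \<Rightarrow> 'b) \<Rightarrow> ('h \<Rightarrow> ('h \<times> 'h) list)
     \<Rightarrow> ('h \<Rightarrow> 'b \<Rightarrow> 'b) \<Rightarrow> bool" where
  "sym_partial_action sH sB Delta act \<longleftrightarrow>
     (\<forall>b. Vector_Spaces.linear sH sB (\<lambda>h. act h b)) \<and>
     (\<forall>h. Vector_Spaces.linear sB sB (act h)) \<and>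
     (\<forall>a. act 1 a = a) \<and>
     (\<forall>h a b. act h (a * b) = sum_list (map (\<lambda>(x,y). act x a * act y b) (Delta h))) \<and>
     (\<forall>h k a. act h (act k a) = sum_list (map (\<lambda>(x,y). act x 1 * act (y * k) a) (Delta h))) \<and>
     (\<forall>h k a. act h (act k a) = sum_list (map (\<lambda>(x,y). act (x * k) a * act y 1) (Delta h)))"

definition hact :: "'h::ring_1 \<Rightarrow> ('h \<Rightarrow> 'b) \<Rightarrow> ('h \<Rightarrow> 'b)" where
  "hact h f = (\<lambda>k. f (k * h))"

definition dphi :: "('h \<Rightarrow> 'b \<Rightarrow> 'b) \<Rightarrow> 'b \<Rightarrow> ('h \<Rightarrow> 'b)" where
  "dphi act b = (\<lambda>h. act h b)"

inductive_set Bbar :: "('k::field \<Rightarrow> 'b::ring_1 \<Rightarrow> 'b) \<Rightarrow> ('h::ring_1 \<Rightarrow> 'b \<Rightarrow> 'b) \<Rightarrow> ('h \<Rightarrow> 'b) set"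
  for sB :: "'k::field \<Rightarrow> 'b::ring_1 \<Rightarrow> 'b" and act :: "'h::ring_1 \<Rightarrow> 'b \<Rightarrow> 'b" where
  gen: "dphi act b \<in> Bbar sB act"
| zero: "(\<lambda>_. 0) \<in> Bbar sB act"
| add: "f \<in> Bbar sB act \<Longrightarrow> g \<in> Bbar sB act \<Longrightarrow> (\<lambda>k. f k + g k) \<in> Bbar sB act"
| scale: "f \<in> Bbar sB act \<Longrightarrow> (\<lambda>k. sB c (f k)) \<in> Bbar sB act"
| hmod: "f \<in> Bbar sB act \<Longrightarrow> hact h f \<in> Bbar sB act"

definition conv :: "('h \<Rightarrow> ('h \<times> 'h) list) \<Rightarrow> ('h \<Rightarrow> 'b::ring_1) \<Rightarrow> ('h \<Rightarrow> 'b) \<Rightarrow> ('h \<Rightarrow> 'b)" where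
  "conv Delta f g = (\<lambda>k. sum_list (map (\<lambda>(a,b). f a * g b) (Delta k)))"

end

theory Submission
  imports Defs
begin

(* Every element of \<overline>B is a finite sum of translates h \<triangleright> \<phi>(b), i.e. of functions
   k \<mapsto> (k h)\<cdot>b.  Multiplicativity of \<phi> is the axiom h\<cdot>(ab) = (h1\<cdot>a)(h2\<cdot>b), the module
   algebra identity is multiplicativity of \<Delta>, and associativity of the convolution is
   coassociativity.  The two symmetry axioms give k\<cdot>(a (h\<cdot>c)) = (k1\<cdot>a)(k2 h\<cdot>c), that is
   \<phi>(a) * (h \<triangleright> \<phi>(c)) = \<phi>(a (h\<cdot>c)); this makes \<phi>(B) an ideal, and combined with the
   antipode it yields (h \<triangleright> \<phi>(a)) * (g \<triangleright> \<phi>(b)) = \<Sum> h1 \<triangleright> \<phi>(a (S(h2) g\<cdot>b)) \<in> \<overline>B.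
   Idempotency comes from \<phi>(b) = \<phi>(1) * \<phi>(b).  Identities of Sweedler sums are obtained
   from the tensor identities of the Hopf algebra by testing against linear functionals on B,
   which separate points. *)

(* Linearity with respect to arbitrary scalar actions, without the module hypotheses built
   into Vector_Spaces.linear, so that it can be checked by simp. *)
definition k_linear ::
  "('k::field \<Rightarrow> 'a::ab_group_add \<Rightarrow> 'a) \<Rightarrow> ('k \<Rightarrow> 'c::ab_group_add \<Rightarrow> 'c) \<Rightarrow> ('a \<Rightarrow> 'c) \<Rightarrow> bool" where
  "k_linear s1 s2 f \<longleftrightarrow> (\<forall>x y. f (x + y) = f x + f y) \<and> (\<forall>c x. f (s1 c x) = s2 c (f x))"

lemma k_linear_add: "k_linear s1 s2 f \<Longrightarrow> f (x + y) = f x + f y"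
  unfolding k_linear_def by auto

lemma k_linear_scale: "k_linear s1 s2 f \<Longrightarrow> f (s1 c x) = s2 c (f x)"
  unfolding k_linear_def by auto

lemma k_linear_zero: "k_linear s1 s2 f \<Longrightarrow> f 0 = 0"
  using k_linear_add[of s1 s2 f 0 0] by simp

lemma k_linear_sum_list:
  "k_linear s1 s2 f \<Longrightarrow> f (sum_list (map g xs)) = sum_list (map (\<lambda>i. f (g i)) xs)"
  by (induction xs) (auto simp: k_linear_zero k_linear_add)

lemma k_linear_comp: "k_linear s1 s2 f \<Longrightarrow> k_linear s2 s3 g \<Longrightarrow> k_linear s1 s3 (\<lambda>x. g (f x))"
  unfolding k_linear_def by auto

lemma linear_imp_k_linear: "Vector_Spaces.linear s1 s2 f \<Longrightarrow> k_linear s1 s2 f"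
  unfolding k_linear_def Vector_Spaces.linear_iff by auto

lemma k_linear_imp_linear:
  "vector_space s1 \<Longrightarrow> vector_space s2 \<Longrightarrow> k_linear s1 s2 f \<Longrightarrow> Vector_Spaces.linear s1 s2 f"
  unfolding k_linear_def Vector_Spaces.linear_iff by auto

lemma vector_space_field_mult: "vector_space ((*) :: 'k::field \<Rightarrow> 'k \<Rightarrow> 'k)"
  by unfold_locales (simp_all add: algebra_simps)

lemma vector_space_eq_if_functionals_eq:
  fixes u v :: "'b::ab_group_add" and s :: "'k::field \<Rightarrow> 'b \<Rightarrow> 'b"
  assumes vs: "vector_space s" and functionals_eq: "\<And>l. k_linear s (*) l \<Longrightarrow> l u = l v"
  shows "u = v"
proof (rule ccontr)
  assume "u \<noteq> v"
  interpret vp: vector_space_pair s "(*) :: 'k \<Rightarrow> 'k \<Rightarrow> 'k"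
    using vs vector_space_field_mult by (simp add: vector_space_pair_def)
  have "vp.vs1.independent {u - v}" using \<open>u \<noteq> v\<close> by simp
  from vp.linear_independent_extend[OF this, of "\<lambda>_. 1"]
  obtain l where "Vector_Spaces.linear s (*) l" and l_diff: "l (u - v) = (1::'k)"
    by blast
  then have l: "k_linear s (*) l" by (simp add: linear_imp_k_linear)
  have "l (u - v) = l u - l v" using k_linear_add[OF l, of "u - v" v] by simp
  then show False using l_diff functionals_eq[OF l] by simp
qed

definition sweedler :: "('h \<times> 'h) list \<Rightarrow> ('h \<Rightarrow> 'h \<Rightarrow> 'b::monoid_add) \<Rightarrow> 'b" where
  "sweedler D F = sum_list (map (\<lambda>(x,y). F x y) D)"

definition sweedler3 :: "('h \<times> 'h \<times> 'h) list \<Rightarrow> ('h \<Rightarrow> 'h \<Rightarrow> 'h \<Rightarrow> 'b::monoid_add) \<Rightarrow> 'b" where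
  "sweedler3 D F = sum_list (map (\<lambda>(x,y,z). F x y z) D)"

lemma sweedler_Nil [simp]: "sweedler [] F = 0"
  by (simp add: sweedler_def)

lemma sweedler_Cons [simp]: "sweedler (p # D) F = F (fst p) (snd p) + sweedler D F"
  by (simp add: sweedler_def split_def)

lemma sweedler_zero [simp]: "sweedler D (\<lambda>x y. 0) = (0::'b::monoid_add)"
  by (induction D) simp_all

lemma sweedler_add:
  "sweedler D (\<lambda>x y. (F x y :: 'b::comm_monoid_add) + G x y) = sweedler D F + sweedler D G"
  by (induction D) (simp_all add: algebra_simps)

lemma sweedler_mult_left: "c * sweedler D F = sweedler D (\<lambda>x y. c * (F x y :: 'b::ring))"
  by (induction D) (simp_all add: algebra_simps)

lemma sweedler_mult_right: "sweedler D F * c = sweedler D (\<lambda>x y. (F x y :: 'b::ring) * c)"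
  by (induction D) (simp_all add: algebra_simps)

lemma sweedler_sum_list:
  "sweedler D (\<lambda>x y. sum_list (map (\<lambda>i. F i x y) L))
     = (sum_list (map (\<lambda>i. sweedler D (F i)) L) :: 'b::comm_monoid_add)"
  unfolding sweedler_def by (induction D) (auto simp: sum_list_addf)

lemma sweedler_swap:
  "sweedler D1 (\<lambda>a b. sweedler D2 (\<lambda>c d. G a b c d))
     = sweedler D2 (\<lambda>c d. sweedler D1 (\<lambda>a b. (G a b c d :: 'b::comm_monoid_add)))"
  by (induction D1) (simp_all add: sweedler_add)

lemma k_linear_sweedler: "k_linear s1 s2 f \<Longrightarrow> f (sweedler D F) = sweedler D (\<lambda>x y. f (F x y))"
  unfolding sweedler_def by (simp add: k_linear_sum_list split_def)

lemma sweedler3_concat_left: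
  "sweedler3 (concat (map (\<lambda>(a,b). map (\<lambda>(a1,a2). (a1,a2,b)) (Delta a)) D)) F
     = sweedler D (\<lambda>a b. sweedler (Delta a) (\<lambda>a1 a2. F a1 a2 b))"
  unfolding sweedler3_def sweedler_def by (induction D) (simp_all add: split_def comp_def)

lemma sweedler3_concat_right:
  "sweedler3 (concat (map (\<lambda>(a,b). map (\<lambda>(b1,b2). (a,b1,b2)) (Delta b)) D)) F
     = sweedler D (\<lambda>a b. sweedler (Delta b) (\<lambda>b1 b2. F a b1 b2))"
  unfolding sweedler3_def sweedler_def by (induction D) (simp_all add: split_def comp_def)

lemma sweedler_concat_mult:
  "sweedler (concat (map (\<lambda>(a,b). map (\<lambda>(c,d). (a * c, b * d)) D') D)) F
     = sweedler D (\<lambda>a b. sweedler D' (\<lambda>c d. F (a * c) (b * d)))"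
  unfolding sweedler_def by (induction D) (simp_all add: split_def comp_def)

locale partial_hopf_action =
  fixes sH :: "'k::field \<Rightarrow> 'h::ring_1 \<Rightarrow> 'h"
    and sB :: "'k \<Rightarrow> 'b::ring_1 \<Rightarrow> 'b"
    and Delta :: "'h \<Rightarrow> ('h \<times> 'h) list"
    and eps :: "'h \<Rightarrow> 'k" and S :: "'h \<Rightarrow> 'h"
    and act :: "'h \<Rightarrow> 'b \<Rightarrow> 'b"
  assumes hopf: "hopf_algebra sH Delta eps S"
    and k_algebra_B: "k_algebra sB"
    and partial_action: "sym_partial_action sH sB Delta act"
begin

lemma vector_space_H: "vector_space sH"
  using hopf unfolding hopf_algebra_def k_algebra_def by auto

lemma vector_space_B: "vector_space sB"
  using k_algebra_B unfolding k_algebra_def by auto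

lemma scaleH_mult_left: "sH c (x * y) = sH c x * y"
  using hopf unfolding hopf_algebra_def k_algebra_def by metis

lemma scaleH_mult_right: "sH c (x * y) = x * sH c y"
  using hopf unfolding hopf_algebra_def k_algebra_def by metis

lemma scaleB_mult_left: "sB c (x * y) = sB c x * y"
  using k_algebra_B unfolding k_algebra_def by auto

lemma scaleB_mult_right: "sB c (x * y) = x * sB c y"
  using k_algebra_B unfolding k_algebra_def by metis

lemma scaleB_add: "sB c (x + y) = sB c x + sB c y"
  using vector_space_B by (simp add: vector_space.vector_space_assms(1))

lemma scaleB_scaleB_commute: "sB c (sB d x) = sB d (sB c x)"
  using vector_space_B by (simp add: vector_space.vector_space_assms(3) mult.commute)

lemma k_linear_scaleB: "k_linear sB sB (sB c)"
  unfolding k_linear_def by (simp add: scaleB_add scaleB_scaleB_commute)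

lemma sweedler_scaleB: "sweedler D (\<lambda>x y. sB c (F x y)) = sB c (sweedler D F)"
  using k_linear_sweedler[OF k_linear_scaleB] by metis

lemma k_linear_antipode: "k_linear sH sH S"
  using hopf unfolding hopf_algebra_def by (auto intro: linear_imp_k_linear)

lemma counit_right: "sweedler (Delta h) (\<lambda>a b. sH (eps b) a) = h"
  using hopf unfolding hopf_algebra_def sweedler_def by auto

lemma antipode_right: "sweedler (Delta h) (\<lambda>a b. a * S b) = sH (eps h) 1"
  using hopf unfolding hopf_algebra_def sweedler_def by auto

lemma k_linear_act_left: "k_linear sH sB (\<lambda>h. act h b)"
  using partial_action unfolding sym_partial_action_def by (auto intro: linear_imp_k_linear)

lemma k_linear_act_right: "k_linear sB sB (act h)"
  using partial_action unfolding sym_partial_action_def by (auto intro: linear_imp_k_linear)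

lemma act_one: "act 1 a = a"
  using partial_action unfolding sym_partial_action_def by auto

lemma act_mult: "act h (a * b) = sweedler (Delta h) (\<lambda>x y. act x a * act y b)"
  using partial_action unfolding sym_partial_action_def sweedler_def by auto

lemma act_act_left_unit: "act h (act k a) = sweedler (Delta h) (\<lambda>x y. act x 1 * act (y * k) a)"
  using partial_action unfolding sym_partial_action_def sweedler_def by auto

lemma act_act_right_unit: "act h (act k a) = sweedler (Delta h) (\<lambda>x y. act (x * k) a * act y 1)"
  using partial_action unfolding sym_partial_action_def sweedler_def by auto

lemmas linearity_simps = distrib_left distrib_right mult.assoc
  k_linear_add[OF k_linear_act_left] k_linear_scale[OF k_linear_act_left]
  k_linear_add[OF k_linear_act_right] k_linear_scale[OF k_linear_act_right]
  k_linear_add[OF k_linear_antipode] k_linear_scale[OF k_linear_antipode]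
  scaleH_mult_left[symmetric] scaleH_mult_right[symmetric]
  scaleB_mult_left[symmetric] scaleB_mult_right[symmetric]
  sweedler_add sweedler_scaleB scaleB_add

lemma sweedler_eq_if_tens2_eq:
  assumes "tens2_eq sH D1 D2"
    and "\<And>y. k_linear sH sB (\<lambda>x. F x y)" and "\<And>x. k_linear sH sB (F x)"
  shows "sweedler D1 F = sweedler D2 F"
proof (rule vector_space_eq_if_functionals_eq[OF vector_space_B])
  fix l :: "'b \<Rightarrow> 'k" assume l: "k_linear sB (*) l"
  have "bilin_form sH (\<lambda>x y. l (F x y))"
    unfolding bilin_form_def using assms(2,3) l
    by (auto intro!: k_linear_imp_linear[OF vector_space_H vector_space_field_mult]
        k_linear_comp[of sH sB _ "(*)" l])
  then have "sweedler D1 (\<lambda>x y. l (F x y)) = sweedler D2 (\<lambda>x y. l (F x y))"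
    using assms(1) unfolding tens2_eq_def sweedler_def by blast
  then show "l (sweedler D1 F) = l (sweedler D2 F)"
    by (simp add: k_linear_sweedler[OF l])
qed

lemma sweedler3_eq_if_tens3_eq:
  assumes "tens3_eq sH D1 D2" and "\<And>y z. k_linear sH sB (\<lambda>x. F x y z)"
    and "\<And>x z. k_linear sH sB (\<lambda>y. F x y z)" and "\<And>x y. k_linear sH sB (F x y)"
  shows "sweedler3 D1 F = sweedler3 D2 F"
proof (rule vector_space_eq_if_functionals_eq[OF vector_space_B])
  fix l :: "'b \<Rightarrow> 'k" assume l: "k_linear sB (*) l"
  have "trilin_form sH (\<lambda>x y z. l (F x y z))"
    unfolding trilin_form_def using assms(2-4) l
    by (auto intro!: k_linear_imp_linear[OF vector_space_H vector_space_field_mult]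
        k_linear_comp[of sH sB _ "(*)" l])
  then have "sweedler3 D1 (\<lambda>x y z. l (F x y z)) = sweedler3 D2 (\<lambda>x y z. l (F x y z))"
    using assms(1) unfolding tens3_eq_def sweedler3_def by blast
  then show "l (sweedler3 D1 F) = l (sweedler3 D2 F)"
    unfolding sweedler3_def by (simp add: k_linear_sum_list[OF l] split_def)
qed

lemma sweedler_coassoc:
  assumes "\<And>y z. k_linear sH sB (\<lambda>x. F x y z)"
    and "\<And>x z. k_linear sH sB (\<lambda>y. F x y z)" and "\<And>x y. k_linear sH sB (F x y)"
  shows "sweedler (Delta h) (\<lambda>a b. sweedler (Delta a) (\<lambda>a1 a2. F a1 a2 b))
       = sweedler (Delta h) (\<lambda>a b. sweedler (Delta b) (\<lambda>b1 b2. F a b1 b2))"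
proof -
  have "tens3_eq sH
        (concat (map (\<lambda>(a,b). map (\<lambda>(a1,a2). (a1,a2,b)) (Delta a)) (Delta h)))
        (concat (map (\<lambda>(a,b). map (\<lambda>(b1,b2). (a,b1,b2)) (Delta b)) (Delta h)))"
    using hopf unfolding hopf_algebra_def by blast
  from sweedler3_eq_if_tens3_eq[OF this assms] show ?thesis
    by (simp only: sweedler3_concat_left sweedler3_concat_right)
qed

lemma sweedler_Delta_mult:
  assumes "\<And>y. k_linear sH sB (\<lambda>x. F x y)" and "\<And>x. k_linear sH sB (F x)"
  shows "sweedler (Delta (x * y)) F
       = sweedler (Delta x) (\<lambda>a b. sweedler (Delta y) (\<lambda>c d. F (a * c) (b * d)))"
proof -
  have "tens2_eq sH (Delta (x * y))
        (concat (map (\<lambda>(a,b). map (\<lambda>(c,d). (a * c, b * d)) (Delta y)) (Delta x)))"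
    using hopf unfolding hopf_algebra_def by blast
  from sweedler_eq_if_tens2_eq[OF this assms] show ?thesis
    by (simp only: sweedler_concat_mult)
qed

lemma sweedler_antipode_cancel:
  assumes G_left: "\<And>v. k_linear sH sB (\<lambda>u. G u v)" and G_right: "\<And>u. k_linear sH sB (G u)"
  shows "sweedler (Delta h) (\<lambda>x1 x'. sweedler (Delta x') (\<lambda>x2 x3. G x1 (x2 * S x3 * g))) = G h g"
proof -
  have inner: "sweedler (Delta x') (\<lambda>x2 x3. G x1 (x2 * S x3 * g)) = G (sH (eps x') x1) g"
    for x1 x'
  proof -
    have "k_linear sH sB (\<lambda>z. G x1 (z * g))"
      by (rule k_linear_comp[OF _ G_right]) (simp add: k_linear_def distrib_right scaleH_mult_left)
    from k_linear_sweedler[OF this, of "Delta x'" "\<lambda>x2 x3. x2 * S x3"]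
    have "sweedler (Delta x') (\<lambda>x2 x3. G x1 (x2 * S x3 * g))
        = G x1 (sweedler (Delta x') (\<lambda>x2 x3. x2 * S x3) * g)"
      by simp
    also have "\<dots> = sB (eps x') (G x1 g)"
      by (simp add: antipode_right scaleH_mult_left[symmetric] k_linear_scale[OF G_right])
    also have "\<dots> = G (sH (eps x') x1) g"
      by (rule k_linear_scale[OF G_left, symmetric])
    finally show ?thesis .
  qed
  have "sweedler (Delta h) (\<lambda>x1 x'. G (sH (eps x') x1) g)
      = G (sweedler (Delta h) (\<lambda>x1 x'. sH (eps x') x1)) g"
    by (simp add: k_linear_sweedler[OF G_left])
  then show ?thesis by (simp add: inner counit_right)
qed

(* In both identities the factor act _ 1 introduced by a symmetry axiom is absorbed
   again by act_mult, after coassociativity has moved it next to its partner. *)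

lemma act_mult_act: "act k (a * act h c) = sweedler (Delta k) (\<lambda>x y. act x a * act (y * h) c)"
proof -
  have "act k (a * act h c) = sweedler (Delta k) (\<lambda>x y. act x a * act y (act h c))"
    by (rule act_mult)
  also have "\<dots> = sweedler (Delta k)
      (\<lambda>x y. sweedler (Delta y) (\<lambda>y1 y2. act x a * act y1 1 * act (y2 * h) c))"
    by (simp add: act_act_left_unit sweedler_mult_left mult.assoc)
  also have "\<dots> = sweedler (Delta k)
      (\<lambda>x y. sweedler (Delta x) (\<lambda>x1 x2. act x1 a * act x2 1 * act (y * h) c))"
    by (rule sweedler_coassoc[symmetric]) (simp_all add: k_linear_def linearity_simps)
  also have "\<dots> = sweedler (Delta k) (\<lambda>x y. act x a * act (y * h) c)"
    by (simp add: sweedler_mult_right[symmetric] act_mult[symmetric])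
  finally show ?thesis .
qed

lemma act_act_mult: "act k (act h c * b) = sweedler (Delta k) (\<lambda>x y. act (x * h) c * act y b)"
proof -
  have "act k (act h c * b) = sweedler (Delta k) (\<lambda>x y. act x (act h c) * act y b)"
    by (rule act_mult)
  also have "\<dots> = sweedler (Delta k)
      (\<lambda>x y. sweedler (Delta x) (\<lambda>x1 x2. act (x1 * h) c * act x2 1 * act y b))"
    by (simp add: act_act_right_unit sweedler_mult_right)
  also have "\<dots> = sweedler (Delta k)
      (\<lambda>x y. sweedler (Delta y) (\<lambda>y1 y2. act (x * h) c * act y1 1 * act y2 b))"
    by (rule sweedler_coassoc) (simp_all add: k_linear_def linearity_simps)
  also have "\<dots> = sweedler (Delta k) (\<lambda>x y. act (x * h) c * act y b)"
    by (simp add: sweedler_mult_left[symmetric] act_mult[symmetric] mult.assoc)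
  finally show ?thesis .
qed

definition sum_translates :: "('h \<times> 'b) list \<Rightarrow> 'h \<Rightarrow> 'b" where
  "sum_translates L = (\<lambda>k. sum_list (map (\<lambda>(h,b). act (k * h) b) L))"

lemma sum_translates_eq_hact_dphi:
  "sum_translates L k = sum_list (map (\<lambda>(h,b). hact h (dphi act b) k) L)"
  by (simp add: sum_translates_def hact_def dphi_def)

lemma Bbar_imp_sum_translates: "f \<in> Bbar sB act \<Longrightarrow> \<exists>L. f = sum_translates L"
proof (induction rule: Bbar.induct)
  case (gen b)
  show ?case by (rule exI[of _ "[(1,b)]"]) (simp add: sum_translates_def dphi_def)
next
  case zero
  show ?case by (rule exI[of _ "[]"]) (simp add: sum_translates_def)
next
  case (add f g)
  then obtain L1 L2 where "f = sum_translates L1" "g = sum_translates L2" by blast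
  then show ?case by (intro exI[of _ "L1 @ L2"]) (simp add: sum_translates_def)
next
  case (scale f c)
  then obtain L where "f = sum_translates L" by blast
  then show ?case
    by (intro exI[of _ "map (\<lambda>(h,b). (h, sB c b)) L"])
       (simp add: sum_translates_def k_linear_sum_list[OF k_linear_scaleB] linearity_simps
         split_def comp_def)
next
  case (hmod f h)
  then obtain L where "f = sum_translates L" by blast
  then show ?case
    by (intro exI[of _ "map (\<lambda>(h',b). (h * h', b)) L"])
       (simp add: sum_translates_def hact_def split_def comp_def mult.assoc)
qed

lemma Bbar_k_linear: "f \<in> Bbar sB act \<Longrightarrow> k_linear sH sB f"
proof (induction rule: Bbar.induct)
  case (gen b)
  then show ?case using k_linear_act_left by (simp add: dphi_def)
next
  case zero
  then show ?case using k_linear_zero[OF k_linear_scaleB] by (simp add: k_linear_def)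
next
  case (add f g)
  then show ?case by (simp add: k_linear_def linearity_simps)
next
  case (scale f c)
  then show ?case by (simp add: k_linear_def linearity_simps scaleB_scaleB_commute)
next
  case (hmod f h)
  then show ?case by (simp add: k_linear_def hact_def linearity_simps)
qed

lemma Bbar_sum_list:
  "(\<And>i. i \<in> set L \<Longrightarrow> F i \<in> Bbar sB act) \<Longrightarrow> (\<lambda>k. sum_list (map (\<lambda>i. F i k) L)) \<in> Bbar sB act"
proof (induction L)
  case Nil
  then show ?case using Bbar.zero by simp
next
  case (Cons a L)
  then have "F a \<in> Bbar sB act" "(\<lambda>k. sum_list (map (\<lambda>i. F i k) L)) \<in> Bbar sB act"
    by simp_all
  then show ?case using Bbar.add by fastforce
qed

lemma Bbar_sweedler:
  "(\<And>x y. F x y \<in> Bbar sB act) \<Longrightarrow> (\<lambda>k. sweedler D (\<lambda>x y. F x y k)) \<in> Bbar sB act"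
  unfolding sweedler_def split_def by (rule Bbar_sum_list) simp

lemma hact_hact: "hact x (hact y f) = hact (x * y) f"
  by (simp add: hact_def mult.assoc)

lemma k_linear_dphi: "k_linear sH sB (dphi act b)"
  using k_linear_act_left by (simp add: dphi_def)

lemma k_linear_hact: "k_linear sH sB f \<Longrightarrow> k_linear sH sB (hact h f)"
  by (simp add: hact_def k_linear_def linearity_simps)

lemma conv_eq_sweedler: "conv Delta f g = (\<lambda>k. sweedler (Delta k) (\<lambda>a b. f a * g b))"
  by (simp add: conv_def sweedler_def)

lemma conv_assoc:
  assumes f: "k_linear sH sB f" and g: "k_linear sH sB g" and h: "k_linear sH sB h"
  shows "conv Delta (conv Delta f g) h = conv Delta f (conv Delta g h)"
proof (rule ext)
  fix k
  have "conv Delta (conv Delta f g) h k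
      = sweedler (Delta k) (\<lambda>x y. sweedler (Delta x) (\<lambda>a b. f a * g b * h y))"
    by (simp add: conv_eq_sweedler sweedler_mult_right)
  also have "\<dots> = sweedler (Delta k) (\<lambda>x y. sweedler (Delta y) (\<lambda>a b. f x * g a * h b))"
    by (rule sweedler_coassoc)
       (simp_all add: k_linear_def linearity_simps k_linear_add[OF f] k_linear_add[OF g]
         k_linear_add[OF h] k_linear_scale[OF f] k_linear_scale[OF g] k_linear_scale[OF h])
  also have "\<dots> = conv Delta f (conv Delta g h) k"
    by (simp add: conv_eq_sweedler sweedler_mult_left mult.assoc)
  finally show "conv Delta (conv Delta f g) h k = conv Delta f (conv Delta g h) k" .
qed

lemma conv_at_mult:
  assumes f: "k_linear sH sB f" and g: "k_linear sH sB g"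
  shows "conv Delta f g (k * h) = sweedler (Delta h) (\<lambda>x y. conv Delta (hact x f) (hact y g) k)"
proof -
  have "conv Delta f g (k * h) = sweedler (Delta (k * h)) (\<lambda>a b. f a * g b)"
    by (simp add: conv_eq_sweedler)
  also have "\<dots> = sweedler (Delta k) (\<lambda>a b. sweedler (Delta h) (\<lambda>c d. f (a * c) * g (b * d)))"
    by (rule sweedler_Delta_mult)
       (simp_all add: k_linear_def linearity_simps k_linear_add[OF f] k_linear_add[OF g]
         k_linear_scale[OF f] k_linear_scale[OF g])
  also have "\<dots> = sweedler (Delta h) (\<lambda>c d. sweedler (Delta k) (\<lambda>a b. f (a * c) * g (b * d)))"
    by (rule sweedler_swap)
  finally show ?thesis by (simp add: conv_eq_sweedler hact_def)
qed

lemma hact_conv: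
  "k_linear sH sB f \<Longrightarrow> k_linear sH sB g \<Longrightarrow>
   hact h (conv Delta f g) = (\<lambda>k. sum_list (map (\<lambda>(x,y). conv Delta (hact x f) (hact y g) k) (Delta h)))"
  by (rule ext) (simp add: hact_def conv_at_mult sweedler_def)

lemma conv_add_left: "conv Delta (\<lambda>k. f k + g k) h = (\<lambda>k. conv Delta f h k + conv Delta g h k)"
  by (simp add: conv_eq_sweedler distrib_right sweedler_add)

lemma conv_add_right: "conv Delta f (\<lambda>k. g k + h k) = (\<lambda>k. conv Delta f g k + conv Delta f h k)"
  by (simp add: conv_eq_sweedler distrib_left sweedler_add)

lemma conv_scale_left: "conv Delta (\<lambda>k. sB c (f k)) g = (\<lambda>k. sB c (conv Delta f g k))"
  by (simp add: conv_eq_sweedler scaleB_mult_left[symmetric] sweedler_scaleB)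

lemma conv_scale_right: "conv Delta f (\<lambda>k. sB c (g k)) = (\<lambda>k. sB c (conv Delta f g k))"
  by (simp add: conv_eq_sweedler scaleB_mult_right[symmetric] sweedler_scaleB)

lemma dphi_mult: "dphi act (a * b) = conv Delta (dphi act a) (dphi act b)"
  by (rule ext) (simp add: conv_eq_sweedler dphi_def act_mult)

lemma conv_dphi_hact_dphi: "conv Delta (dphi act a) (hact h (dphi act b)) = dphi act (a * act h b)"
  by (rule ext) (simp add: conv_eq_sweedler act_mult_act dphi_def hact_def)

lemma conv_hact_dphi_hact_dphi:
  "conv Delta (hact h (dphi act a)) (hact g (dphi act b))
     = (\<lambda>k. sweedler (Delta h) (\<lambda>h1 h2. hact h1 (dphi act (a * act (S h2 * g) b)) k))"
proof (rule ext)
  fix k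
  define G where "G u v = sweedler (Delta k) (\<lambda>p q. act (p * u) a * act (q * v) b)" for u v
  have G_left: "k_linear sH sB (\<lambda>u. G u v)" for v
    unfolding G_def by (simp add: k_linear_def linearity_simps)
  have G_right: "k_linear sH sB (G u)" for u
    unfolding G_def by (simp add: k_linear_def linearity_simps)
  have "sweedler (Delta h) (\<lambda>h1 h2. hact h1 (dphi act (a * act (S h2 * g) b)) k)
      = sweedler (Delta h) (\<lambda>h1 h2. conv Delta (dphi act a) (hact (S h2 * g) (dphi act b)) (k * h1))"
    by (simp only: conv_dphi_hact_dphi) (simp add: hact_def)
  also have "\<dots> = sweedler (Delta h) (\<lambda>h1 h2. sweedler (Delta h1)
      (\<lambda>z1 z2. conv Delta (hact z1 (dphi act a)) (hact z2 (hact (S h2 * g) (dphi act b))) k))"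
    by (simp add: conv_at_mult k_linear_dphi k_linear_hact)
  also have "\<dots> = sweedler (Delta h) (\<lambda>h1 h2. sweedler (Delta h1) (\<lambda>z1 z2. G z1 (z2 * (S h2 * g))))"
    by (simp add: hact_hact G_def conv_eq_sweedler hact_def dphi_def mult.assoc)
  also have "\<dots> = sweedler (Delta h) (\<lambda>x1 x'. sweedler (Delta x') (\<lambda>x2 x3. G x1 (x2 * (S x3 * g))))"
    by (rule sweedler_coassoc) (simp_all add: G_def k_linear_def linearity_simps)
  also have "\<dots> = G h g"
    using sweedler_antipode_cancel[OF G_left G_right, of h g] by (simp add: mult.assoc)
  finally show "conv Delta (hact h (dphi act a)) (hact g (dphi act b)) k
      = sweedler (Delta h) (\<lambda>h1 h2. hact h1 (dphi act (a * act (S h2 * g) b)) k)"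
    by (simp add: G_def conv_eq_sweedler hact_def dphi_def)
qed

lemma conv_in_Bbar:
  assumes "f \<in> Bbar sB act" "g \<in> Bbar sB act"
  shows "conv Delta f g \<in> Bbar sB act"
proof -
  obtain L1 L2 where f: "f = sum_translates L1" and g: "g = sum_translates L2"
    using Bbar_imp_sum_translates assms by blast
  have "conv Delta f g = (\<lambda>k. sum_list (map (\<lambda>j. sum_list (map (\<lambda>i.
      conv Delta (hact (fst i) (dphi act (snd i))) (hact (fst j) (dphi act (snd j))) k) L1)) L2))"
    by (rule ext)
       (simp add: f g conv_eq_sweedler sum_translates_eq_hact_dphi split_def
         sum_list_const_mult[symmetric] sum_list_mult_const[symmetric] sweedler_sum_list)
  also have "\<dots> \<in> Bbar sB act"
    by (intro Bbar_sum_list) (simp add: conv_hact_dphi_hact_dphi Bbar_sweedler Bbar.hmod Bbar.gen)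
  finally show ?thesis .
qed

lemma conv_dphi_sum_translates:
  "conv Delta (dphi act b) (sum_translates L)
     = dphi act (sum_list (map (\<lambda>(h,c). b * act h c) L))"
  by (simp add: fun_eq_iff conv_eq_sweedler sum_translates_def split_def dphi_def act_mult_act
      sum_list_const_mult[symmetric] sweedler_sum_list k_linear_sum_list[OF k_linear_act_right])

lemma conv_sum_translates_dphi:
  "conv Delta (sum_translates L) (dphi act b)
     = dphi act (sum_list (map (\<lambda>(h,c). act h c * b) L))"
  by (simp add: fun_eq_iff conv_eq_sweedler sum_translates_def split_def dphi_def act_act_mult
      sum_list_mult_const[symmetric] sweedler_sum_list k_linear_sum_list[OF k_linear_act_right])

lemma Bbar_idempotent:
  assumes "f \<in> Bbar sB act"
  shows "\<exists>ps. set ps \<subseteq> Bbar sB act \<times> Bbar sB act \<and>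
    f = (\<lambda>k. sum_list (map (\<lambda>(g1,g2). conv Delta g1 g2 k) ps))"
proof -
  obtain L where L: "f = sum_translates L" using Bbar_imp_sum_translates assms by blast
  define ps where "ps = concat (map (\<lambda>(h,b).
      map (\<lambda>(x,y). (hact x (dphi act 1), hact y (dphi act b))) (Delta h)) L)"
  have "set ps \<subseteq> Bbar sB act \<times> Bbar sB act"
    unfolding ps_def by (auto intro!: Bbar.hmod Bbar.gen)
  moreover have "act (k * h) b
      = sweedler (Delta h) (\<lambda>x y. conv Delta (hact x (dphi act 1)) (hact y (dphi act b)) k)"
    for k h b
  proof -
    have "act (k * h) b = conv Delta (dphi act 1) (dphi act b) (k * h)"
      by (simp only: dphi_mult[symmetric] mult_1_left) (simp add: dphi_def)
    also have "\<dots> = sweedler (Delta h) (\<lambda>x y. conv Delta (hact x (dphi act 1)) (hact y (dphi act b)) k)"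
      by (rule conv_at_mult[OF k_linear_dphi k_linear_dphi])
    finally show ?thesis .
  qed
  then have "f k = sum_list (map (\<lambda>(g1,g2). conv Delta g1 g2 k) ps)" for k
    unfolding L ps_def sum_translates_def
    by (induction L) (simp_all add: sweedler_def split_def comp_def)
  ultimately show ?thesis by blast
qed

end

theorem mainTheorem15:
  fixes sH :: "'k::field \<Rightarrow> 'h::ring_1 \<Rightarrow> 'h"
    and sB :: "'k \<Rightarrow> 'b::ring_1 \<Rightarrow> 'b"
    and Delta :: "'h \<Rightarrow> ('h \<times> 'h) list"
    and eps :: "'h \<Rightarrow> 'k" and S :: "'h \<Rightarrow> 'h"
    and act :: "'h \<Rightarrow> 'b \<Rightarrow> 'b"
  assumes H: "hopf_algebra sH Delta eps S"
    and B: "k_algebra sB"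
    and P: "sym_partial_action sH sB Delta act"
  shows
    \<comment> \<open>(1) \<overline>B is closed under convolution and is an idempotent H-module algebra\<close>
    "(\<forall>f\<in>Bbar sB act. \<forall>g\<in>Bbar sB act. conv Delta f g \<in> Bbar sB act)
   \<and> (\<forall>f\<in>Bbar sB act. \<forall>g\<in>Bbar sB act. \<forall>h\<in>Bbar sB act.
        conv Delta (conv Delta f g) h = conv Delta f (conv Delta g h))
   \<and> (\<forall>f\<in>Bbar sB act. \<forall>g\<in>Bbar sB act. \<forall>h\<in>Bbar sB act.
        conv Delta f (\<lambda>k. g k + h k) = (\<lambda>k. conv Delta f g k + conv Delta f h k)
      \<and> conv Delta (\<lambda>k. f k + g k) h = (\<lambda>k. conv Delta f h k + conv Delta g h k))
   \<and> (\<forall>f\<in>Bbar sB act. \<forall>g\<in>Bbar sB act. \<forall>c.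
        conv Delta (\<lambda>k. sB c (f k)) g = (\<lambda>k. sB c (conv Delta f g k))
      \<and> conv Delta f (\<lambda>k. sB c (g k)) = (\<lambda>k. sB c (conv Delta f g k)))
   \<and> (\<forall>h. \<forall>f\<in>Bbar sB act. \<forall>g\<in>Bbar sB act.
        hact h (conv Delta f g)
          = (\<lambda>k. sum_list (map (\<lambda>(x,y). conv Delta (hact x f) (hact y g) k) (Delta h))))
   \<and> (\<forall>f\<in>Bbar sB act. \<exists>ps. set ps \<subseteq> Bbar sB act \<times> Bbar sB act \<and>
        f = (\<lambda>k. sum_list (map (\<lambda>(g1,g2). conv Delta g1 g2 k) ps)))
    \<comment> \<open>(2) \<phi> is multiplicative\<close>
   \<and> (\<forall>a b. dphi act (a * b) = conv Delta (dphi act a) (dphi act b))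
    \<comment> \<open>(3) \<phi>(B) is an ideal of \<overline>B\<close>
   \<and> range (dphi act) \<subseteq> Bbar sB act
   \<and> (\<forall>b. \<forall>f\<in>Bbar sB act. conv Delta (dphi act b) f \<in> range (dphi act)
                         \<and> conv Delta f (dphi act b) \<in> range (dphi act))
    \<comment> \<open>consequently: globalization\<close>
   \<and> inj (dphi act)
   \<and> (\<forall>h b. dphi act (act h b) = conv Delta (dphi act 1) (hact h (dphi act b)))"
proof -
  interpret partial_hopf_action sH sB Delta eps S act using H B P by (rule partial_hopf_action.intro)
  have ideal: "conv Delta (dphi act b) f \<in> range (dphi act) \<and> conv Delta f (dphi act b) \<in> range (dphi act)"
    if "f \<in> Bbar sB act" for b f
    using Bbar_imp_sum_translates[OF that]
    by (auto simp: conv_dphi_sum_translates conv_sum_translates_dphi)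
  have "inj (dphi act)"
    by (rule injI) (metis act_one dphi_def)
  moreover have "dphi act (act h b) = conv Delta (dphi act 1) (hact h (dphi act b))" for h b
    by (simp add: conv_dphi_hact_dphi)
  ultimately show ?thesis
    using conv_in_Bbar Bbar_idempotent ideal
    by (simp add: conv_assoc Bbar_k_linear hact_conv dphi_mult image_subset_iff Bbar.gen
        conv_add_left conv_add_right conv_scale_left conv_scale_right)
qed

end
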